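(* Let $N\ge1$, $E=\{0,1,\dots,N\}$, and let $Q$ be the birth–death matrix on $E$ with $q_{00}=-b_0$, $q_{01}=b_0$; $q_{n,n-1}=a_n$, $q_{nn}=-(a_n+b_n)$, $q_{n,n+1}=b_n$ for $1\le n\le N-1$; $q_{N,N-1}=a_N$, $q_{NN}=-(a_N+b_N)$; all other entries $0$; where $a_i>0$ $(1\le i\le N)$ and $b_i>0$ $(0\le i\le N)$. Let $\lambda_0=\lambda_{\min}(-Q)>0$ be the minimal eigenvalue of $-Q$. Let $f_1$ be any vector with $f_1(i)>0$ for all $i\in E$ and define successively $f_{n+1}=f_n\,I\!I(f_n)$ (componentwise product), $n\ge1$. Then $f_{n+1}=(-Q)^{-1}f_n=(-Q)^{-n}f_1$ for all $n\ge1$; moreover, for every $i\in E$, $$\lim_{n\to\infty}I\!I(f_n)(i)=\frac1{\lambda_0},$$ and consequently $\lim_{n\to\infty}\min_{i\in E}I\!I(f_n)(i)=1/\lambda_0=\lim_{n\to\infty}\max_{i\in E}I\!I(f_n)(i)$.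
   Context: Define $\mu_0=1$ and $\mu_n=\frac{b_0b_1\cdots b_{n-1}}{a_1a_2\cdots a_n}$ for $1\le n\le N$. For a positive function $f$ on $E$ define $$I\!I(f)(i)=\frac1{f_i}\sum_{j=i}^N\frac1{\mu_jb_j}\sum_{k=0}^j\mu_kf_k,\qquad i\in E.$$ *)

theory Defs
  imports "Jordan_Normal_Form.Char_Poly" "Jordan_Normal_Form.Matrix"
begin

definition bd_Q :: "(nat \<Rightarrow> real) \<Rightarrow> (nat \<Rightarrow> real) \<Rightarrow> nat \<Rightarrow> real mat" where
  "bd_Q a b N = mat (N+1) (N+1) (\<lambda>(i,j).
      if i = 0 then (if j = 0 then - b 0 else if j = 1 then b 0 else 0)
      else (if j + 1 = i then a i
            else if j = i then - (a i + b i)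
            else if j = i + 1 \<and> i < N then b i
            else 0))"

definition bd_mu :: "(nat \<Rightarrow> real) \<Rightarrow> (nat \<Rightarrow> real) \<Rightarrow> nat \<Rightarrow> real" where
  "bd_mu a b n = (\<Prod>k<n. b k) / (\<Prod>k\<in>{1..n}. a k)"

definition bd_II :: "(nat \<Rightarrow> real) \<Rightarrow> (nat \<Rightarrow> real) \<Rightarrow> nat \<Rightarrow> (nat \<Rightarrow> real) \<Rightarrow> nat \<Rightarrow> real" where
  "bd_II a b N f i = 1 / f i *
     (\<Sum>j=i..N. 1 / (bd_mu a b j * b j) * (\<Sum>k=0..j. bd_mu a b k * f k))"

text \<open>Minimal eigenvalue of a square real matrix (all eigenvalues of -Q are real).\<close>
definition lambda_min :: "real mat \<Rightarrow> real" where
  "lambda_min A = Min {k. eigenvalue A k}"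

end

theory Submission
  imports Defs
begin

text \<open>Exchanging the two sums in \<open>II\<close> shows \<open>f \<cdot> II(f) = G f\<close> for the Green kernel
  \<open>G i k = \<mu> k \<cdot> (\<Sum>j \<ge> max i k. 1 / (\<mu> j \<cdot> b j))\<close>, which is strictly positive and inverts \<open>-Q\<close>.
  So the recursion is the power iteration \<open>f (n+1) = (-Q)\<inverse> f n\<close> with a positive kernel. Each growth
  ratio \<open>f (n+1) i / f n i\<close> is a weighted mean of the previous ones, with weights bounded below because
  the iterates stay uniformly comparable; hence the oscillation of the ratios contracts geometrically,
  they converge to a common limit \<open>L\<close>, and the normalised iterates converge to a positive
  eigenvector of \<open>G\<close> for \<open>L\<close>. Thus \<open>1/L\<close> is an eigenvalue of \<open>-Q\<close>, and it is the least one: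
  every real eigenvalue \<open>k\<close> of \<open>-Q\<close> is nonnegative by diagonal dominance, and \<open>1/k\<close> is an
  eigenvalue of \<open>G\<close>, hence bounded by \<open>L\<close> in modulus by comparison with the positive eigenvector.\<close>

lemma weighted_mean_bounds:
  fixes w u :: "nat \<Rightarrow> real"
  assumes fin: "finite I" and w_ge: "\<And>k. k \<in> I \<Longrightarrow> w k \<ge> \<delta>" and "\<delta> \<ge> 0"
    and w_sum: "sum w I = 1" and k0: "k0 \<in> I" and k1: "k1 \<in> I"
    and u_between: "\<And>k. k \<in> I \<Longrightarrow> u k0 \<le> u k \<and> u k \<le> u k1"
  shows "u k0 + \<delta> * (u k1 - u k0) \<le> (\<Sum>k\<in>I. w k * u k)"
    and "(\<Sum>k\<in>I. w k * u k) \<le> u k1 - \<delta> * (u k1 - u k0)"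
proof -
  have w_nonneg: "\<And>k. k \<in> I \<Longrightarrow> w k \<ge> 0" using w_ge \<open>\<delta> \<ge> 0\<close> by force
  have "\<delta> * (u k1 - u k0) \<le> w k1 * (u k1 - u k0)"
    using w_ge[OF k1] u_between[OF k1] by (intro mult_right_mono) auto
  also have "\<dots> \<le> (\<Sum>k\<in>I. w k * (u k - u k0))"
    by (rule member_le_sum[OF k1 _ fin]) (use w_nonneg u_between in auto)
  also have "\<dots> = (\<Sum>k\<in>I. w k * u k) - u k0"
    using w_sum by (simp add: right_diff_distrib sum_subtractf sum_distrib_right[symmetric])
  finally show "u k0 + \<delta> * (u k1 - u k0) \<le> (\<Sum>k\<in>I. w k * u k)" by linarith
  have "\<delta> * (u k1 - u k0) \<le> w k0 * (u k1 - u k0)"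
    using w_ge[OF k0] u_between[OF k1] by (intro mult_right_mono) auto
  also have "\<dots> \<le> (\<Sum>k\<in>I. w k * (u k1 - u k))"
    by (rule member_le_sum[OF k0 _ fin]) (use w_nonneg u_between in auto)
  also have "\<dots> = u k1 - (\<Sum>k\<in>I. w k * u k)"
    using w_sum by (simp add: right_diff_distrib sum_subtractf sum_distrib_right[symmetric])
  finally show "(\<Sum>k\<in>I. w k * u k) \<le> u k1 - \<delta> * (u k1 - u k0)" by linarith
qed

lemma convergent_if_increments_geometric:
  fixes x :: "nat \<Rightarrow> real"
  assumes "\<And>n. \<bar>x (Suc n) - x n\<bar> \<le> K * \<theta> ^ n" and "0 \<le> \<theta>" "\<theta> < 1"
  shows "convergent x"
proof -
  have "summable (\<lambda>n. K * \<theta> ^ n)"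
    using assms by (intro summable_mult summable_geometric) auto
  hence "summable (\<lambda>n. x (Suc n) - x n)"
    by (rule summable_comparison_test'[where N=0]) (use assms(1) in auto)
  hence "(\<lambda>n. \<Sum>k<n. x (Suc k) - x k) \<longlonglongrightarrow> suminf (\<lambda>n. x (Suc n) - x n)"
    by (rule summable_LIMSEQ)
  hence "(\<lambda>n. x n - x 0 + x 0) \<longlonglongrightarrow> suminf (\<lambda>n. x (Suc n) - x n) + x 0"
    by (intro tendsto_add) (auto simp: sum_lessThan_telescope)
  thus ?thesis unfolding convergent_def by auto
qed

lemma abs_eigenvalue_le_positive_eigenvalue:
  fixes G :: "nat \<Rightarrow> nat \<Rightarrow> real" and \<sigma> x :: "nat \<Rightarrow> real"
  assumes G_nonneg: "\<And>i k. i \<le> N \<Longrightarrow> k \<le> N \<Longrightarrow> G i k \<ge> 0"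
    and \<sigma>_pos: "\<And>i. i \<le> N \<Longrightarrow> \<sigma> i > 0"
    and \<sigma>_eigen: "\<And>i. i \<le> N \<Longrightarrow> (\<Sum>k=0..N. G i k * \<sigma> k) = L * \<sigma> i"
    and x_eigen: "\<And>i. i \<le> N \<Longrightarrow> (\<Sum>k=0..N. G i k * x k) = \<mu> * x i"
    and x_nonzero: "j \<le> N" "x j \<noteq> 0"
  shows "\<bar>\<mu>\<bar> \<le> L"
proof -
  define t where "t = Max ((\<lambda>i. \<bar>x i\<bar> / \<sigma> i) ` {0..N})"
  have "t \<in> (\<lambda>i. \<bar>x i\<bar> / \<sigma> i) ` {0..N}" unfolding t_def by (intro Max_in) auto
  then obtain i0 where i0: "i0 \<le> N" "t = \<bar>x i0\<bar> / \<sigma> i0" by auto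
  have t_ge: "\<bar>x k\<bar> / \<sigma> k \<le> t" if "k \<le> N" for k
    unfolding t_def using that by (intro Max_ge) auto
  have x_le: "\<bar>x k\<bar> \<le> t * \<sigma> k" if "k \<le> N" for k
    using t_ge[OF that] \<sigma>_pos[OF that] by (simp add: divide_le_eq)
  have "0 < \<bar>x j\<bar> / \<sigma> j" using x_nonzero \<sigma>_pos[OF x_nonzero(1)] by simp
  hence "t > 0" using t_ge[OF x_nonzero(1)] by linarith
  have x_i0: "\<bar>x i0\<bar> = t * \<sigma> i0" using i0 \<sigma>_pos[OF i0(1)] by simp
  have "\<bar>\<mu>\<bar> * \<bar>x i0\<bar> = \<bar>\<Sum>k=0..N. G i0 k * x k\<bar>" using x_eigen[OF i0(1)] by (simp add: abs_mult)
  also have "\<dots> \<le> (\<Sum>k=0..N. G i0 k * (t * \<sigma> k))"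
    by (rule order.trans[OF sum_abs sum_mono])
      (use G_nonneg i0(1) x_le in \<open>auto simp: abs_mult intro: mult_left_mono\<close>)
  also have "\<dots> = L * \<bar>x i0\<bar>"
    using \<sigma>_eigen[OF i0(1)] x_i0 by (simp add: sum_distrib_left[symmetric] mult_ac)
  finally show ?thesis using \<open>t > 0\<close> \<sigma>_pos[OF i0(1)] x_i0 by simp
qed

lemma eigenvalue_nonneg_if_diagonally_dominant:
  fixes A :: "nat \<Rightarrow> nat \<Rightarrow> real" and x :: "nat \<Rightarrow> real"
  assumes dominant: "\<And>i. i \<le> N \<Longrightarrow> (\<Sum>j\<in>{0..N} - {i}. \<bar>A i j\<bar>) \<le> A i i"
    and x_eigen: "\<And>i. i \<le> N \<Longrightarrow> (\<Sum>j=0..N. A i j * x j) = k * x i"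
    and x_nonzero: "j \<le> N" "x j \<noteq> 0"
  shows "k \<ge> 0"
proof -
  define t where "t = Max ((\<lambda>i. \<bar>x i\<bar>) ` {0..N})"
  have "t \<in> (\<lambda>i. \<bar>x i\<bar>) ` {0..N}" unfolding t_def by (intro Max_in) auto
  then obtain i where i: "i \<le> N" "t = \<bar>x i\<bar>" by auto
  have x_le: "\<bar>x l\<bar> \<le> \<bar>x i\<bar>" if "l \<le> N" for l
    unfolding i(2)[symmetric] t_def using that by (intro Max_ge) auto
  have "x i \<noteq> 0" using x_le[OF x_nonzero(1)] x_nonzero(2) by auto
  have "(k - A i i) * x i = (\<Sum>l\<in>{0..N} - {i}. A i l * x l)"
    using x_eigen[OF i(1)] i(1) by (simp add: sum.remove[of _ i] algebra_simps)
  hence "\<bar>k - A i i\<bar> * \<bar>x i\<bar> = \<bar>\<Sum>l\<in>{0..N} - {i}. A i l * x l\<bar>"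
    by (simp add: abs_mult[symmetric])
  also have "\<dots> \<le> (\<Sum>l\<in>{0..N} - {i}. \<bar>A i l\<bar> * \<bar>x i\<bar>)"
    by (rule order.trans[OF sum_abs sum_mono]) (auto simp: abs_mult intro: mult_left_mono x_le)
  also have "\<dots> \<le> A i i * \<bar>x i\<bar>"
    using dominant[OF i(1)] by (simp add: sum_distrib_right[symmetric] mult_right_mono)
  finally show ?thesis using \<open>x i \<noteq> 0\<close> by simp
qed

locale positive_kernel_iteration =
  fixes N :: nat and G :: "nat \<Rightarrow> nat \<Rightarrow> real" and F :: "nat \<Rightarrow> nat \<Rightarrow> real"
  assumes kernel_pos: "\<And>i k. i \<le> N \<Longrightarrow> k \<le> N \<Longrightarrow> G i k > 0"
    and F_0_pos: "\<And>i. i \<le> N \<Longrightarrow> F 0 i > 0"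
    and F_Suc: "\<And>n i. i \<le> N \<Longrightarrow> F (Suc n) i = (\<Sum>k=0..N. G i k * F n k)"
begin

definition "growth n i = F (Suc n) i / F n i"
definition "min_growth n = Min (growth n ` {0..N})"
definition "max_growth n = Max (growth n ` {0..N})"
definition "osc n = max_growth n - min_growth n"

definition "kmin = Min ((\<lambda>(i,k). G i k) ` ({0..N} \<times> {0..N}))"
definition "kmax = Max ((\<lambda>(i,k). G i k) ` ({0..N} \<times> {0..N}))"
definition "C = kmax / kmin"
definition "\<delta> = kmin / (kmax * (N+1) * C)"
definition "\<theta> = 1 - \<delta>"

definition "weight n i k = G i k * F n k / F (Suc n) i"
definition "profile n i = F (Suc n) i / F (Suc n) 0"

lemma F_pos: "i \<le> N \<Longrightarrow> F n i > 0"
proof (induction n arbitrary: i)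
  case 0 thus ?case using F_0_pos by auto
next
  case (Suc n)
  have "(\<Sum>k=0..N. G i k * F n k) > 0"
    by (rule sum_pos) (use Suc kernel_pos in auto)
  thus ?case using F_Suc Suc by simp
qed

lemma kernel_bounds: "i \<le> N \<Longrightarrow> k \<le> N \<Longrightarrow> kmin \<le> G i k \<and> G i k \<le> kmax"
  unfolding kmin_def kmax_def by (auto intro!: Min_le Max_ge image_eqI[where x="(i,k)"])

lemma kmin_pos: "kmin > 0"
  unfolding kmin_def by (subst Min_gr_iff) (auto intro!: kernel_pos)

lemma kmax_pos: "kmax > 0" using kmin_pos kernel_bounds[of 0 0] by linarith

lemma C_ge_1: "C \<ge> 1" unfolding C_def using kmin_pos kernel_bounds[of 0 0] by simp

lemma F_comparable: assumes "i \<le> N" "k \<le> N" shows "F (Suc n) i \<le> C * F (Suc n) k"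
proof -
  let ?S = "\<Sum>j=0..N. F n j"
  have "F (Suc n) i \<le> (\<Sum>j=0..N. kmax * F n j)"
    unfolding F_Suc[OF assms(1)]
    by (rule sum_mono) (use kernel_bounds F_pos assms in \<open>auto intro!: mult_right_mono\<close>)
  also have "\<dots> = C * (kmin * ?S)" unfolding C_def using kmin_pos by (simp add: sum_distrib_left)
  also have "kmin * ?S = (\<Sum>j=0..N. kmin * F n j)" by (simp add: sum_distrib_left)
  also have "\<dots> \<le> F (Suc n) k"
    unfolding F_Suc[OF assms(2)]
    by (rule sum_mono) (use kernel_bounds F_pos assms in \<open>auto intro!: mult_right_mono\<close>)
  finally show ?thesis using C_ge_1 by (simp add: mult_left_mono)
qed

lemma growth_pos: "i \<le> N \<Longrightarrow> growth n i > 0" unfolding growth_def using F_pos by auto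

lemma weight_nonneg: "i \<le> N \<Longrightarrow> k \<le> N \<Longrightarrow> weight n i k \<ge> 0"
  unfolding weight_def using F_pos kernel_pos by (auto intro!: divide_nonneg_pos less_imp_le)

lemma weight_sum: "i \<le> N \<Longrightarrow> (\<Sum>k=0..N. weight n i k) = 1"
  unfolding weight_def using F_pos[of i "Suc n"]
  by (simp add: sum_divide_distrib[symmetric] F_Suc[symmetric])

lemma growth_Suc_eq_weighted_mean:
  assumes "i \<le> N" shows "growth (Suc n) i = (\<Sum>k=0..N. weight n i k * growth n k)"
proof -
  have "(\<Sum>k=0..N. weight n i k * growth n k) = (\<Sum>k=0..N. G i k * F (Suc n) k / F (Suc n) i)"
  proof (rule sum.cong)
    fix k assume "k \<in> {0..N}"
    thus "weight n i k * growth n k = G i k * F (Suc n) k / F (Suc n) i"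
      using F_pos[of k n] by (simp add: weight_def growth_def)
  qed simp
  also have "\<dots> = F (Suc (Suc n)) i / F (Suc n) i"
    by (simp add: sum_divide_distrib[symmetric] F_Suc[OF assms])
  finally show ?thesis unfolding growth_def by simp
qed

lemma delta_bounds: "0 < \<delta>" "\<delta> \<le> 1"
proof -
  have "kmin \<le> kmax" using kernel_bounds[of 0 0] by simp
  also have "kmax \<le> kmax * (N+1) * C"
    using kmax_pos C_ge_1 by (simp add: mult.assoc mult_ge1_I)
  finally show "\<delta> \<le> 1" "0 < \<delta>"
    unfolding \<delta>_def using kmin_pos kmax_pos C_ge_1 by simp_all
qed

text \<open>From the second step on all entries of \<open>F\<close> are comparable up to the factor \<open>C\<close>, so every
  averaging weight is bounded below; this is what makes the oscillation of the growth rates contract.\<close>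

lemma weight_ge_delta: assumes "i \<le> N" "k \<le> N" shows "\<delta> \<le> weight (Suc n) i k"
proof -
  have "F (Suc (Suc n)) i \<le> (\<Sum>j=0..N. kmax * F (Suc n) j)"
    unfolding F_Suc[OF assms(1), of "Suc n"]
    by (rule sum_mono) (use kernel_bounds F_pos assms in \<open>auto intro!: mult_right_mono\<close>)
  also have "\<dots> \<le> (\<Sum>j=0..N. kmax * (C * F (Suc n) k))"
    by (rule sum_mono) (use F_comparable kmax_pos assms in auto)
  also have "\<dots> = kmin * F (Suc n) k / \<delta>"
    unfolding \<delta>_def using kmin_pos kmax_pos C_ge_1 by simp
  also have "\<dots> \<le> G i k * F (Suc n) k / \<delta>"
    using kernel_bounds[OF assms] F_pos[OF assms(2), of "Suc n"] delta_bounds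
    by (intro divide_right_mono mult_right_mono) auto
  finally show ?thesis unfolding weight_def using F_pos[OF assms(1)] delta_bounds
    by (simp add: field_simps)
qed

lemma growth_between: "i \<le> N \<Longrightarrow> min_growth n \<le> growth n i \<and> growth n i \<le> max_growth n"
  unfolding min_growth_def max_growth_def by (auto intro!: Min_le Max_ge)

lemma min_growth_attained: obtains k where "k \<le> N" "growth n k = min_growth n"
proof -
  have "min_growth n \<in> growth n ` {0..N}" unfolding min_growth_def by (intro Min_in) auto
  thus ?thesis using that by auto
qed

lemma max_growth_attained: obtains k where "k \<le> N" "growth n k = max_growth n"
proof -
  have "max_growth n \<in> growth n ` {0..N}" unfolding max_growth_def by (intro Max_in) auto
  thus ?thesis using that by auto
qed

lemma growth_Suc_bounds:
  assumes "\<And>k. k \<le> N \<Longrightarrow> d \<le> weight n i k" "d \<ge> 0" "i \<le> N"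
  shows "min_growth n + d * osc n \<le> growth (Suc n) i"
    and "growth (Suc n) i \<le> max_growth n - d * osc n"
proof -
  obtain k0 where k0: "k0 \<le> N" "growth n k0 = min_growth n" by (rule min_growth_attained)
  obtain k1 where k1: "k1 \<le> N" "growth n k1 = max_growth n" by (rule max_growth_attained)
  note bounds = weighted_mean_bounds[of "{0..N}" d "weight n i" k0 k1 "growth n",
      OF _ _ assms(2) weight_sum[OF assms(3)]]
  show "min_growth n + d * osc n \<le> growth (Suc n) i" "growth (Suc n) i \<le> max_growth n - d * osc n"
    using bounds k0 k1 assms(1) growth_between
    unfolding growth_Suc_eq_weighted_mean[OF assms(3)] osc_def by auto
qed

lemma min_growth_mono: "min_growth n \<le> min_growth (Suc n)"
proof -
  obtain k where "k \<le> N" "growth (Suc n) k = min_growth (Suc n)" by (rule min_growth_attained)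
  with growth_Suc_bounds(1)[where n=n and i=k and d=0] weight_nonneg show ?thesis by auto
qed

lemma max_growth_antimono: "max_growth (Suc n) \<le> max_growth n"
proof -
  obtain k where "k \<le> N" "growth (Suc n) k = max_growth (Suc n)" by (rule max_growth_attained)
  with growth_Suc_bounds(2)[where n=n and i=k and d=0] weight_nonneg show ?thesis by auto
qed

lemma osc_nonneg: "osc n \<ge> 0" unfolding osc_def using growth_between[of 0 n] by auto

lemma osc_contracts: "osc (Suc (Suc n)) \<le> \<theta> * osc (Suc n)"
proof -
  obtain k0 where k0: "k0 \<le> N" "growth (Suc (Suc n)) k0 = min_growth (Suc (Suc n))"
    by (rule min_growth_attained)
  obtain k1 where k1: "k1 \<le> N" "growth (Suc (Suc n)) k1 = max_growth (Suc (Suc n))"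
    by (rule max_growth_attained)
  have "min_growth (Suc n) + \<delta> * osc (Suc n) \<le> growth (Suc (Suc n)) k0"
    by (rule growth_Suc_bounds(1)) (use weight_ge_delta delta_bounds k0 in auto)
  moreover have "growth (Suc (Suc n)) k1 \<le> max_growth (Suc n) - \<delta> * osc (Suc n)"
    by (rule growth_Suc_bounds(2)) (use weight_ge_delta delta_bounds k1 in auto)
  moreover have "\<delta> * osc (Suc n) \<ge> 0" using delta_bounds osc_nonneg by simp
  ultimately show ?thesis using k0 k1 unfolding osc_def \<theta>_def by (simp add: algebra_simps)
qed

lemma theta_bounds: "0 \<le> \<theta>" "\<theta> < 1" using delta_bounds unfolding \<theta>_def by auto

lemma osc_le_geometric: "osc (Suc n) \<le> osc 1 * \<theta> ^ n"
proof (induction n)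
  case (Suc n)
  have "osc (Suc (Suc n)) \<le> \<theta> * osc (Suc n)" by (rule osc_contracts)
  also have "\<dots> \<le> \<theta> * (osc 1 * \<theta> ^ n)"
    using Suc theta_bounds by (intro mult_left_mono) auto
  finally show ?case by (simp add: algebra_simps)
qed simp

lemma min_growth_pos: "min_growth n > 0"
  by (metis min_growth_attained growth_pos)

lemma min_growth_ge_initial: "min_growth 0 \<le> min_growth n"
  using incseq_SucI[of min_growth, OF min_growth_mono] unfolding incseq_def by simp

lemma max_growth_le_initial: "max_growth n \<le> max_growth 0"
  using decseq_SucI[of max_growth, OF max_growth_antimono] unfolding decseq_def by auto

lemma growth_limits:
  obtains L where "L > 0" "min_growth \<longlonglongrightarrow> L" "max_growth \<longlonglongrightarrow> L"
    "\<And>i. i \<le> N \<Longrightarrow> (\<lambda>n. growth n i) \<longlonglongrightarrow> L"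
proof -
  have "min_growth n \<le> max_growth 0" for n
    using growth_between[of 0 n] max_growth_le_initial[of n] by linarith
  then obtain L where L: "min_growth \<longlonglongrightarrow> L" "\<And>n. min_growth n \<le> L"
    using incseq_convergent[of min_growth "max_growth 0"] incseq_SucI[of min_growth, OF min_growth_mono] by blast
  have "L > 0" using L(2)[of 0] min_growth_pos[of 0] by linarith
  have geometric: "(\<lambda>n. osc 1 * \<theta> ^ n) \<longlonglongrightarrow> 0"
    using theta_bounds by (auto intro!: tendsto_eq_intros LIMSEQ_power_zero)
  have "(\<lambda>n. osc (Suc n)) \<longlonglongrightarrow> 0"
    by (rule real_tendsto_sandwich[OF _ _ tendsto_const geometric]) (use osc_nonneg osc_le_geometric in auto)
  hence "(\<lambda>n. min_growth n + osc n) \<longlonglongrightarrow> L + 0"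
    by (intro tendsto_add L(1)) (rule LIMSEQ_imp_Suc)
  hence max_lim: "max_growth \<longlonglongrightarrow> L" unfolding osc_def by simp
  have "(\<lambda>n. growth n i) \<longlonglongrightarrow> L" if "i \<le> N" for i
    by (rule real_tendsto_sandwich[OF _ _ L(1) max_lim]) (use growth_between that in auto)
  thus ?thesis using that \<open>L > 0\<close> L(1) max_lim by blast
qed

lemma profile_bounds: "i \<le> N \<Longrightarrow> 1 / C \<le> profile n i \<and> profile n i \<le> C"
  using F_comparable[of i 0 n] F_comparable[of 0 i n] F_pos[of 0 "Suc n"] F_pos[of i "Suc n"] C_ge_1
  unfolding profile_def by (auto simp: divide_simps mult.commute)

lemma profile_Suc:
  "i \<le> N \<Longrightarrow> profile (Suc n) i = profile n i * (growth (Suc n) i / growth (Suc n) 0)"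
  using F_pos[of 0 "Suc n"] F_pos[of 0 "Suc (Suc n)"] F_pos[of i "Suc n"] F_pos[of i "Suc (Suc n)"]
  unfolding profile_def growth_def by (simp add: field_simps)

lemma profile_increment_le: assumes "i \<le> N"
  shows "\<bar>profile (Suc n) i - profile n i\<bar> \<le> (C * osc 1 / min_growth 0) * \<theta> ^ n"
proof -
  have r0: "growth (Suc n) 0 \<ge> min_growth 0"
    using growth_between[of 0 "Suc n"] min_growth_ge_initial[of "Suc n"] by simp
  have m0: "min_growth 0 > 0" by (rule min_growth_pos)
  have d: "\<bar>growth (Suc n) i - growth (Suc n) 0\<bar> \<le> osc (Suc n)"
    using growth_between[of i "Suc n"] growth_between[of 0 "Suc n"] assms unfolding osc_def by auto
  have p: "0 \<le> profile n i" "profile n i \<le> C"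
    using profile_bounds[OF assms, of n] C_ge_1 by (auto intro: order.trans[rotated])
  have "profile (Suc n) i - profile n i
      = profile n i * (growth (Suc n) i - growth (Suc n) 0) / growth (Suc n) 0"
    using profile_Suc[OF assms, of n] r0 m0 by (simp add: field_simps)
  hence "\<bar>profile (Suc n) i - profile n i\<bar>
      = profile n i * \<bar>growth (Suc n) i - growth (Suc n) 0\<bar> / growth (Suc n) 0"
    using p r0 m0 by (simp add: abs_mult)
  also have "\<dots> \<le> C * osc (Suc n) / min_growth 0"
    using p d r0 m0 osc_nonneg[of "Suc n"] by (intro frac_le mult_mono) auto
  also have "\<dots> \<le> C * (osc 1 * \<theta> ^ n) / min_growth 0"
    using osc_le_geometric[of n] C_ge_1 m0 by (intro divide_right_mono mult_left_mono) auto
  finally show ?thesis by simp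
qed

lemma kernel_apply_profile:
  "i \<le> N \<Longrightarrow> (\<Sum>k=0..N. G i k * profile n k) = profile (Suc n) i * growth (Suc n) 0"
  using F_pos[of 0 "Suc n"] F_pos[of 0 "Suc (Suc n)"]
  unfolding profile_def growth_def by (simp add: sum_divide_distrib[symmetric] F_Suc)

theorem power_iteration_converges:
  obtains L \<sigma> where "L > 0" "\<And>i. i \<le> N \<Longrightarrow> \<sigma> i > 0"
    "\<And>i. i \<le> N \<Longrightarrow> (\<Sum>k=0..N. G i k * \<sigma> k) = L * \<sigma> i"
    "\<And>i. i \<le> N \<Longrightarrow> (\<lambda>n. F (Suc n) i / F n i) \<longlonglongrightarrow> L"
    "(\<lambda>n. Min ((\<lambda>i. F (Suc n) i / F n i) ` {0..N})) \<longlonglongrightarrow> L"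
    "(\<lambda>n. Max ((\<lambda>i. F (Suc n) i / F n i) ` {0..N})) \<longlonglongrightarrow> L"
proof -
  obtain L where L: "L > 0" "min_growth \<longlonglongrightarrow> L" "max_growth \<longlonglongrightarrow> L"
    "\<And>i. i \<le> N \<Longrightarrow> (\<lambda>n. growth n i) \<longlonglongrightarrow> L" by (rule growth_limits) (rule that)
  define \<sigma> where "\<sigma> i = lim (\<lambda>n. profile n i)" for i
  have profile_lim: "(\<lambda>n. profile n i) \<longlonglongrightarrow> \<sigma> i" if "i \<le> N" for i
    using convergent_if_increments_geometric[OF profile_increment_le[OF that] theta_bounds]
    unfolding \<sigma>_def by (simp add: convergent_LIMSEQ_iff)
  have "0 < 1 / C" using C_ge_1 by simp
  also have "1 / C \<le> \<sigma> i" if "i \<le> N" for i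
    by (rule LIMSEQ_le_const[OF profile_lim[OF that]]) (use profile_bounds[OF that] in auto)
  finally have \<sigma>_pos: "\<sigma> i > 0" if "i \<le> N" for i
    using that by simp
  have "(\<Sum>k=0..N. G i k * \<sigma> k) = L * \<sigma> i" if i: "i \<le> N" for i
  proof (rule LIMSEQ_unique)
    show "(\<lambda>n. \<Sum>k=0..N. G i k * profile n k) \<longlonglongrightarrow> (\<Sum>k=0..N. G i k * \<sigma> k)"
      by (intro tendsto_sum tendsto_mult_left profile_lim) auto
    have "(\<lambda>n. profile (Suc n) i * growth (Suc n) 0) \<longlonglongrightarrow> \<sigma> i * L"
      by (intro tendsto_mult LIMSEQ_Suc profile_lim i L(4)) auto
    thus "(\<lambda>n. \<Sum>k=0..N. G i k * profile n k) \<longlonglongrightarrow> L * \<sigma> i"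
      using kernel_apply_profile[OF i] by (simp add: mult.commute)
  qed
  with that L \<sigma>_pos show ?thesis unfolding min_growth_def max_growth_def growth_def by blast
qed

end

locale birth_death =
  fixes a b :: "nat \<Rightarrow> real" and N :: nat
  assumes N_ge_1: "N \<ge> 1"
    and a_pos: "\<And>i. 1 \<le> i \<Longrightarrow> i \<le> N \<Longrightarrow> a i > 0"
    and b_pos: "\<And>i. i \<le> N \<Longrightarrow> b i > 0"
begin

abbreviation "\<mu> \<equiv> bd_mu a b"
abbreviation "negQ \<equiv> - bd_Q a b N"

definition "exit_rate i = (if i = 0 then b 0 else a i + b i)"

lemma mu_0: "\<mu> 0 = 1" by (simp add: bd_mu_def)

lemma mu_Suc: "\<mu> (Suc n) = \<mu> n * b n / a (Suc n)"
  by (simp add: bd_mu_def)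

lemma mu_pos: "k \<le> N \<Longrightarrow> \<mu> k > 0"
  unfolding bd_mu_def using a_pos b_pos by (intro divide_pos_pos prod_pos) auto

lemma negQ_carrier: "negQ \<in> carrier_mat (N+1) (N+1)" unfolding bd_Q_def by auto

lemma negQ_entry: assumes "i \<le> N" "j \<le> N"
  shows "negQ $$ (i,j) = (if j = i then exit_rate i else 0) - (if j + 1 = i then a i else 0)
                         - (if j = i + 1 \<and> i < N then b i else 0)"
  using assms N_ge_1 unfolding bd_Q_def exit_rate_def by auto

lemma negQ_apply: assumes i: "i \<le> N"
  shows "(\<Sum>j=0..N. negQ $$ (i,j) * x j) = exit_rate i * x i - (if 1 \<le> i then a i * x (i - 1) else 0)
            - (if i < N then b i * x (i + 1) else 0)"
proof -
  have "(\<Sum>j=0..N. negQ $$ (i,j) * x j) = (\<Sum>j=0..N. (if j = i then exit_rate i * x j else 0)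
     - (if j = i - 1 \<and> 1 \<le> i then a i * x j else 0) - (if j = i + 1 \<and> i < N then b i * x j else 0))"
    by (rule sum.cong) (use i in \<open>auto simp: negQ_entry\<close>)
  also have "\<dots> = exit_rate i * x i - (if 1 \<le> i then a i * x (i - 1) else 0)
            - (if i < N then b i * x (i + 1) else 0)"
    using i by (auto simp: sum_subtractf sum.delta' cong: conj_cong)
  finally show ?thesis .
qed

lemma negQ_diagonally_dominant: assumes i: "i \<le> N"
  shows "(\<Sum>j\<in>{0..N} - {i}. \<bar>negQ $$ (i,j)\<bar>) \<le> negQ $$ (i,i)"
proof -
  have "(\<Sum>j\<in>{0..N} - {i}. \<bar>negQ $$ (i,j)\<bar>)
      = (\<Sum>j\<in>{0..N} - {i}. (if j = i - 1 \<and> 1 \<le> i then a i else 0) + (if j = i + 1 \<and> i < N then b i else 0))"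
    by (rule sum.cong) (use i a_pos[of i] b_pos[of i] in \<open>auto simp: negQ_entry\<close>)
  also have "\<dots> \<le> (\<Sum>j=0..N. (if j = i - 1 \<and> 1 \<le> i then a i else 0) + (if j = i + 1 \<and> i < N then b i else 0))"
    by (rule sum_mono2) (use i a_pos b_pos in auto)
  also have "\<dots> = (if 1 \<le> i then a i else 0) + (if i < N then b i else 0)"
    using i by (auto simp: sum.distrib sum.delta' cong: conj_cong)
  also have "\<dots> \<le> negQ $$ (i,i)"
    using i N_ge_1 b_pos[of i] by (auto simp: negQ_entry exit_rate_def)
  finally show ?thesis .
qed


definition "green i k = \<mu> k * (\<Sum>j=max i k..N. 1 / (\<mu> j * b j))"

lemma green_pos: "i \<le> N \<Longrightarrow> k \<le> N \<Longrightarrow> green i k > 0"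
  unfolding green_def using mu_pos b_pos by (intro mult_pos_pos sum_pos) auto

lemma green_apply: assumes i: "i \<le> N"
  shows "(\<Sum>k=0..N. green i k * f k) = (\<Sum>j=i..N. 1 / (\<mu> j * b j) * (\<Sum>k=0..j. \<mu> k * f k))"
proof -
  let ?c = "\<lambda>j. 1 / (\<mu> j * b j)"
  have "(\<Sum>k=0..N. green i k * f k) = (\<Sum>k=0..N. \<Sum>j=i..N. if k \<le> j then ?c j * (\<mu> k * f k) else 0)"
  proof (rule sum.cong)
    fix k
    have "{max i k..N} = {j \<in> {i..N}. k \<le> j}" by auto
    hence tail: "(\<Sum>j=max i k..N. ?c j) = (\<Sum>j=i..N. if k \<le> j then ?c j else 0)"
      by (simp only: sum.inter_filter[OF finite_atLeastAtMost])
    have "green i k * f k = (\<Sum>j=i..N. if k \<le> j then ?c j else 0) * (\<mu> k * f k)"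
      unfolding green_def tail by (simp only: ac_simps)
    also have "\<dots> = (\<Sum>j=i..N. if k \<le> j then ?c j * (\<mu> k * f k) else 0)"
      unfolding sum_distrib_right by (intro sum.cong) auto
    finally show "green i k * f k = \<dots>" .
  qed simp
  also have "\<dots> = (\<Sum>j=i..N. \<Sum>k=0..N. if k \<le> j then ?c j * (\<mu> k * f k) else 0)"
    by (rule sum.swap)
  also have "\<dots> = (\<Sum>j=i..N. ?c j * (\<Sum>k=0..j. \<mu> k * f k))"
  proof (rule sum.cong)
    fix j assume "j \<in> {i..N}"
    hence "{0..j} = {k \<in> {0..N}. k \<le> j}" by auto
    hence head: "(\<Sum>k=0..j. \<mu> k * f k) = (\<Sum>k=0..N. if k \<le> j then \<mu> k * f k else 0)"
      by (simp only: sum.inter_filter[OF finite_atLeastAtMost])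
    show "(\<Sum>k=0..N. if k \<le> j then ?c j * (\<mu> k * f k) else 0) = ?c j * (\<Sum>k=0..j. \<mu> k * f k)"
      unfolding head sum_distrib_left by (intro sum.cong) auto
  qed simp
  finally show ?thesis .
qed

lemma mult_II_eq_green_apply:
  "i \<le> N \<Longrightarrow> f i \<noteq> 0 \<Longrightarrow> f i * bd_II a b N f i = (\<Sum>k=0..N. green i k * f k)"
  unfolding bd_II_def by (simp add: green_apply)

lemma negQ_green_apply: assumes i: "i \<le> N"
  shows "(\<Sum>j=0..N. negQ $$ (i,j) * (\<Sum>k=0..N. green j k * f k)) = f i"
proof -
  define S where "S j = (\<Sum>k=0..j. \<mu> k * f k)" for j
  define g where "g j = (\<Sum>l=j..N. 1 / (\<mu> l * b l) * S l)" for j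
  have "(\<Sum>j=0..N. negQ $$ (i,j) * (\<Sum>k=0..N. green j k * f k)) = (\<Sum>j=0..N. negQ $$ (i,j) * g j)"
    by (rule sum.cong) (auto simp: green_apply g_def S_def)
  also have "\<dots> = exit_rate i * g i - (if 1 \<le> i then a i * g (i - 1) else 0)
            - (if i < N then b i * g (i + 1) else 0)" by (rule negQ_apply[OF i])
  finally have lhs: "(\<Sum>j=0..N. negQ $$ (i,j) * (\<Sum>k=0..N. green j k * f k)) = \<dots>" .
  have g_diff: "g j - g (Suc j) = S j / (\<mu> j * b j)" if "j < N" for j
    unfolding g_def using that by (subst sum.atLeast_Suc_atMost) auto
  have forward: "b i * g i - (if i < N then b i * g (i + 1) else 0) = S i / \<mu> i"
  proof (cases "i < N")
    case True
    thus ?thesis using g_diff[OF True] b_pos[of i] by (simp add: right_diff_distrib[symmetric])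
  next
    case False
    hence "i = N" using i by simp
    thus ?thesis using b_pos[of N] by (simp add: g_def)
  qed
  show ?thesis
  proof (cases i)
    case 0
    thus ?thesis using lhs forward N_ge_1 by (simp add: exit_rate_def mu_0 S_def)
  next
    case (Suc m)
    have "m < N" using i Suc by simp
    have "a i * (S m / (\<mu> m * b m)) = S m / \<mu> i"
      using mu_pos[of m] b_pos[of m] a_pos[of i] \<open>m < N\<close>
      unfolding Suc mu_Suc by (simp add: field_simps)
    moreover have "S i = S m + \<mu> i * f i" unfolding S_def Suc by simp
    ultimately show ?thesis
      using lhs forward g_diff[OF \<open>m < N\<close>] mu_pos[OF i]
      unfolding Suc exit_rate_def by (simp add: algebra_simps add_divide_distrib)
  qed
qed

definition "green_mat = mat (N+1) (N+1) (\<lambda>(i,k). green i k)"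

lemma green_mat_carrier: "green_mat \<in> carrier_mat (N+1) (N+1)" unfolding green_mat_def by auto

lemma negQ_mult_vec_nth:
  "i \<le> N \<Longrightarrow> (negQ *\<^sub>v vec (Suc N) x) $ i = (\<Sum>j=0..N. negQ $$ (i,j) * x j)"
  using negQ_carrier
  by (auto simp: scalar_prod_def atLeastLessThanSuc_atLeastAtMost sum_negf intro!: sum.cong)

lemma green_mat_mult_vec_nth:
  "i \<le> N \<Longrightarrow> (green_mat *\<^sub>v vec (Suc N) x) $ i = (\<Sum>j=0..N. green i j * x j)"
  unfolding green_mat_def
  by (auto simp: scalar_prod_def atLeastLessThanSuc_atLeastAtMost intro!: sum.cong)

lemma negQ_mult_green_mat: "negQ * green_mat = 1\<^sub>m (N+1)"
proof (rule eq_matI)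
  fix i k assume ik: "i < dim_row (1\<^sub>m (N+1))" "k < dim_col (1\<^sub>m (N+1))"
  have "(negQ * green_mat) $$ (i,k) = (\<Sum>j=0..N. negQ $$ (i,j) * green j k)"
    using ik negQ_carrier green_mat_carrier unfolding green_mat_def
    by (auto simp: scalar_prod_def atLeastLessThanSuc_atLeastAtMost sum_negf intro!: sum.cong)
  also have "\<dots> = (\<Sum>j=0..N. negQ $$ (i,j) * (\<Sum>l=0..N. green j l * (if l = k then 1 else 0)))"
    using ik by (intro sum.cong) (auto simp: if_distrib sum.delta cong: if_cong)
  also have "\<dots> = (if i = k then 1 else 0)" using ik by (intro negQ_green_apply) simp
  finally show "(negQ * green_mat) $$ (i,k) = 1\<^sub>m (N+1) $$ (i,k)" using ik by simp
qed (use negQ_carrier green_mat_carrier in auto)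

lemma green_mat_mult_negQ: "green_mat * negQ = 1\<^sub>m (N+1)"
  by (rule mat_mult_left_right_inverse[OF negQ_carrier green_mat_carrier negQ_mult_green_mat])

lemma invertible_negQ: "invertible_mat negQ"
  unfolding invertible_mat_def inverts_mat_def
  using negQ_carrier green_mat_carrier negQ_mult_green_mat green_mat_mult_negQ
  by (auto intro!: exI[of _ green_mat])

lemma left_inverse_negQ_eq_green_mat:
  assumes "B \<in> carrier_mat (N+1) (N+1)" "inverts_mat B negQ"
  shows "B = green_mat"
proof -
  have "B = B * (negQ * green_mat)" using assms(1) by (simp add: negQ_mult_green_mat)
  also have "\<dots> = (B * negQ) * green_mat"
    using assms(1) negQ_carrier green_mat_carrier by (simp add: assoc_mult_mat)
  also have "\<dots> = green_mat"
    using assms green_mat_carrier unfolding inverts_mat_def by simp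
  finally show ?thesis .
qed


lemma eigenvalue_negQ_eigenfunction:
  assumes "eigenvalue negQ k"
  obtains j x where "j \<le> N" "x j \<noteq> 0"
    "\<And>i. i \<le> N \<Longrightarrow> (\<Sum>l=0..N. negQ $$ (i,l) * x l) = k * x i"
    "\<And>i. i \<le> N \<Longrightarrow> k * (\<Sum>l=0..N. green i l * x l) = x i"
proof -
  obtain v where v: "v \<in> carrier_vec (N+1)" "v \<noteq> 0\<^sub>v (N+1)" "negQ *\<^sub>v v = k \<cdot>\<^sub>v v"
    using assms negQ_carrier unfolding eigenvalue_def eigenvector_def by auto
  define x where "x l = v $ l" for l
  have v_eq: "v = vec (N+1) x" unfolding x_def by (rule eq_vecI) (use v(1) in auto)
  have "\<exists>j\<le>N. x j \<noteq> 0"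
  proof (rule ccontr)
    assume "\<not> ?thesis"
    hence "v = 0\<^sub>v (N+1)" unfolding v_eq by (intro eq_vecI) auto
    thus False using v(2) by simp
  qed
  then obtain j where j: "j \<le> N" "x j \<noteq> 0" by blast
  have "k \<cdot>\<^sub>v (green_mat *\<^sub>v v) = green_mat *\<^sub>v (negQ *\<^sub>v v)"
    unfolding v(3) using green_mat_carrier v(1) by (simp add: mult_mat_vec)
  also have "\<dots> = (green_mat * negQ) *\<^sub>v v"
    by (rule assoc_mult_mat_vec[symmetric, OF green_mat_carrier negQ_carrier v(1)])
  also have "\<dots> = v" using v(1) by (simp add: green_mat_mult_negQ)
  finally have green_v: "k \<cdot>\<^sub>v (green_mat *\<^sub>v v) = v" .
  show ?thesis
  proof (rule that[of j x, OF j])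
    fix i assume i: "i \<le> N"
    have "(negQ *\<^sub>v v) $ i = (k \<cdot>\<^sub>v v) $ i" using v(3) by simp
    thus "(\<Sum>l=0..N. negQ $$ (i,l) * x l) = k * x i"
      using i v(1) unfolding v_eq by (simp add: negQ_mult_vec_nth)
    have "(green_mat *\<^sub>v v) $ i = (\<Sum>l=0..N. green i l * x l)"
      unfolding v_eq Suc_eq_plus1[symmetric] by (rule green_mat_mult_vec_nth[OF i])
    moreover have "(k \<cdot>\<^sub>v (green_mat *\<^sub>v v)) $ i = v $ i" using green_v by simp
    ultimately show "k * (\<Sum>l=0..N. green i l * x l) = x i"
      using i green_mat_carrier by (simp add: x_def)
  qed
qed

lemma eigenvalue_negQ_ge:
  assumes "L > 0" "\<And>i. i \<le> N \<Longrightarrow> \<sigma> i > 0"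
    and \<sigma>_eigen: "\<And>i. i \<le> N \<Longrightarrow> (\<Sum>k=0..N. green i k * \<sigma> k) = L * \<sigma> i"
    and "eigenvalue negQ k"
  shows "1 / L \<le> k"
proof (rule eigenvalue_negQ_eigenfunction[OF assms(4)])
  fix j x assume x: "j \<le> N" "x j \<noteq> 0"
    "\<And>i. i \<le> N \<Longrightarrow> (\<Sum>l=0..N. negQ $$ (i,l) * x l) = k * x i"
    "\<And>i. i \<le> N \<Longrightarrow> k * (\<Sum>l=0..N. green i l * x l) = x i"
  have "k \<ge> 0"
    by (rule eigenvalue_nonneg_if_diagonally_dominant[OF negQ_diagonally_dominant x(3) x(1,2)])
  have "k \<noteq> 0" using x(2) x(4)[OF x(1)] by auto
  have green_x: "(\<Sum>l=0..N. green i l * x l) = 1 / k * x i" if "i \<le> N" for i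
    using x(4)[OF that] \<open>k \<noteq> 0\<close> by (simp add: eq_divide_eq mult.commute)
  have "\<bar>1 / k\<bar> \<le> L"
    by (rule abs_eigenvalue_le_positive_eigenvalue[OF _ assms(2) \<sigma>_eigen green_x x(1,2)])
      (simp add: green_pos less_imp_le)
  thus ?thesis using \<open>k \<ge> 0\<close> \<open>k \<noteq> 0\<close> assms(1) by (simp add: field_simps)
qed

lemma eigenvalue_negQ_inverse:
  assumes "L > 0" "\<And>i. i \<le> N \<Longrightarrow> \<sigma> i > 0"
    and \<sigma>_eigen: "\<And>i. i \<le> N \<Longrightarrow> (\<Sum>k=0..N. green i k * \<sigma> k) = L * \<sigma> i"
  shows "eigenvalue negQ (1 / L)"
  unfolding eigenvalue_def eigenvector_def
proof (intro exI[of _ "vec (N+1) \<sigma>"] conjI)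
  show "vec (N+1) \<sigma> \<in> carrier_vec (dim_row negQ)" using negQ_carrier by simp
  show "vec (N+1) \<sigma> \<noteq> 0\<^sub>v (dim_row negQ)"
  proof
    assume "vec (N+1) \<sigma> = 0\<^sub>v (dim_row negQ)"
    hence "vec (N+1) \<sigma> $ 0 = 0\<^sub>v (dim_row negQ) $ 0" by simp
    thus False using assms(2)[of 0] negQ_carrier by simp
  qed
  show "negQ *\<^sub>v vec (N+1) \<sigma> = (1 / L) \<cdot>\<^sub>v vec (N+1) \<sigma>"
  proof (rule eq_vecI)
    fix i assume "i < dim_vec ((1 / L) \<cdot>\<^sub>v vec (N+1) \<sigma>)"
    hence i: "i \<le> N" by simp
    have "L * (\<Sum>j=0..N. negQ $$ (i,j) * \<sigma> j) = (\<Sum>j=0..N. negQ $$ (i,j) * (L * \<sigma> j))"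
      by (simp add: sum_distrib_left mult_ac)
    also have "\<dots> = (\<Sum>j=0..N. negQ $$ (i,j) * (\<Sum>k=0..N. green j k * \<sigma> k))"
      by (intro sum.cong) (simp_all add: \<sigma>_eigen)
    also have "\<dots> = \<sigma> i" by (rule negQ_green_apply[OF i])
    finally show "(negQ *\<^sub>v vec (N+1) \<sigma>) $ i = ((1 / L) \<cdot>\<^sub>v vec (N+1) \<sigma>) $ i"
      using i assms(1) by (simp add: negQ_mult_vec_nth field_simps)
  qed (use negQ_carrier in simp)
qed

lemma lambda_min_negQ:
  assumes "L > 0" "\<And>i. i \<le> N \<Longrightarrow> \<sigma> i > 0"
    and "\<And>i. i \<le> N \<Longrightarrow> (\<Sum>k=0..N. green i k * \<sigma> k) = L * \<sigma> i"
  shows "lambda_min negQ = 1 / L"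
proof -
  have "char_poly negQ \<noteq> 0" using degree_monic_char_poly[OF negQ_carrier] by auto
  hence "finite {k. eigenvalue negQ k}"
    using poly_roots_finite eigenvalue_root_char_poly[OF negQ_carrier] by simp
  thus ?thesis unfolding lambda_min_def
    by (intro Min_eqI) (use eigenvalue_negQ_inverse[OF assms] eigenvalue_negQ_ge[OF assms] in auto)
qed

lemma II_iteration_eq_green_iteration:
  fixes f :: "nat \<Rightarrow> nat \<Rightarrow> real" and n :: nat
  assumes f_1_pos: "\<And>i. i \<le> N \<Longrightarrow> f 1 i > 0"
    and f_rec: "\<And>n i. n \<ge> 1 \<Longrightarrow> i \<le> N \<Longrightarrow> f (n+1) i = f n i * bd_II a b N (f n) i"
    and "n \<ge> 1" "i \<le> N"
  shows "f n i > 0" and "f (n+1) i = (\<Sum>k=0..N. green i k * f n k)"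
proof -
  have f_Suc: "f (n+1) i = (\<Sum>k=0..N. green i k * f n k)"
    if "n \<ge> 1" "i \<le> N" "f n i > 0" for n i
    using f_rec[OF that(1,2)] mult_II_eq_green_apply[OF that(2)] that(3) by simp
  have "\<forall>i\<le>N. f n i > 0" using \<open>n \<ge> 1\<close>
  proof (induction n rule: nat_induct_at_least)
    case (Suc n)
    have "(\<Sum>k=0..N. green i k * f n k) > 0" if "i \<le> N" for i
      by (rule sum_pos) (use Suc.IH green_pos that in auto)
    thus ?case using f_Suc Suc by simp
  qed (use f_1_pos in simp)
  thus "f n i > 0" "f (n+1) i = (\<Sum>k=0..N. green i k * f n k)"
    using f_Suc \<open>n \<ge> 1\<close> \<open>i \<le> N\<close> by auto
qed

lemma green_iteration_vec:
  fixes f :: "nat \<Rightarrow> nat \<Rightarrow> real" and n :: nat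
  assumes f_Suc: "\<And>n i. n \<ge> 1 \<Longrightarrow> i \<le> N \<Longrightarrow> f (n+1) i = (\<Sum>k=0..N. green i k * f n k)"
    and "n \<ge> 1"
  shows "vec (N+1) (f (n+1)) = green_mat *\<^sub>v vec (N+1) (f n)"
    and "vec (N+1) (f (n+1)) = (green_mat ^\<^sub>m n) *\<^sub>v vec (N+1) (f 1)"
proof -
  have step: "vec (N+1) (f (n+1)) = green_mat *\<^sub>v vec (N+1) (f n)" if "n \<ge> 1" for n
    by (rule eq_vecI) (use green_mat_carrier green_mat_mult_vec_nth f_Suc that in auto)
  show "vec (N+1) (f (n+1)) = green_mat *\<^sub>v vec (N+1) (f n)" using step \<open>n \<ge> 1\<close> .
  have "vec (N+1) (f (m+1+k)) = (green_mat ^\<^sub>m k) *\<^sub>v vec (N+1) (f (m+1))" for m k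
  proof (induction k arbitrary: m)
    case 0 thus ?case using green_mat_carrier by simp
  next
    case (Suc k)
    have "(green_mat ^\<^sub>m Suc k) *\<^sub>v vec (N+1) (f (m+1))
        = (green_mat ^\<^sub>m k) *\<^sub>v (green_mat *\<^sub>v vec (N+1) (f (m+1)))"
      using green_mat_carrier by (simp add: assoc_mult_mat_vec[of _ "N+1" "N+1" _ "N+1"])
    also have "\<dots> = vec (N+1) (f (m+1+1+k))" using step[of "m+1"] Suc.IH[of "m+1"] by simp
    finally show ?case by (simp add: ac_simps)
  qed
  from this[of 0 n] show "vec (N+1) (f (n+1)) = (green_mat ^\<^sub>m n) *\<^sub>v vec (N+1) (f 1)" by simp
qed

end

theorem mainTheorem3:
  fixes a b :: "nat \<Rightarrow> real" and N :: nat and f :: "nat \<Rightarrow> nat \<Rightarrow> real"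
  assumes N: "N \<ge> 1"
    and a_pos: "\<And>i. 1 \<le> i \<Longrightarrow> i \<le> N \<Longrightarrow> a i > 0"
    and b_pos: "\<And>i. i \<le> N \<Longrightarrow> b i > 0"
    and f1_pos: "\<And>i. i \<le> N \<Longrightarrow> f 1 i > 0"
    and f_rec: "\<And>n i. n \<ge> 1 \<Longrightarrow> i \<le> N \<Longrightarrow> f (n+1) i = f n i * bd_II a b N (f n) i"
  shows "invertible_mat (- bd_Q a b N)
    \<and> (\<forall>B \<in> carrier_mat (N+1) (N+1). inverts_mat B (- bd_Q a b N) \<longrightarrow>
         (\<forall>n\<ge>1. vec (N+1) (f (n+1)) = B *\<^sub>v vec (N+1) (f n)
                \<and> vec (N+1) (f (n+1)) = (B ^\<^sub>m n) *\<^sub>v vec (N+1) (f 1)))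
    \<and> (\<forall>i\<le>N. (\<lambda>n. bd_II a b N (f n) i) \<longlonglongrightarrow> 1 / lambda_min (- bd_Q a b N))
    \<and> (\<lambda>n. Min ((\<lambda>i. bd_II a b N (f n) i) ` {0..N})) \<longlonglongrightarrow> 1 / lambda_min (- bd_Q a b N)
    \<and> (\<lambda>n. Max ((\<lambda>i. bd_II a b N (f n) i) ` {0..N})) \<longlonglongrightarrow> 1 / lambda_min (- bd_Q a b N)"
proof -
  interpret birth_death a b N using N a_pos b_pos by unfold_locales
  note f_pos = II_iteration_eq_green_iteration(1)[of f, OF f1_pos f_rec]
  note f_Suc = II_iteration_eq_green_iteration(2)[of f, OF f1_pos f_rec]
  interpret P: positive_kernel_iteration N green "\<lambda>n. f (Suc n)"
    by unfold_locales (use green_pos f_pos f_Suc in auto)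
  obtain L \<sigma> where L: "L > 0" "\<And>i. i \<le> N \<Longrightarrow> \<sigma> i > 0"
    "\<And>i. i \<le> N \<Longrightarrow> (\<Sum>k=0..N. green i k * \<sigma> k) = L * \<sigma> i"
    "\<And>i. i \<le> N \<Longrightarrow> (\<lambda>n. f (Suc (Suc n)) i / f (Suc n) i) \<longlonglongrightarrow> L"
    "(\<lambda>n. Min ((\<lambda>i. f (Suc (Suc n)) i / f (Suc n) i) ` {0..N})) \<longlonglongrightarrow> L"
    "(\<lambda>n. Max ((\<lambda>i. f (Suc (Suc n)) i / f (Suc n) i) ` {0..N})) \<longlonglongrightarrow> L"
    by (rule P.power_iteration_converges) (rule that)
  have "1 / lambda_min negQ = L" using lambda_min_negQ[OF L(1-3)] L(1) by simp
  moreover have II: "bd_II a b N (f (Suc n)) i = f (Suc (Suc n)) i / f (Suc n) i" if "i \<le> N" for n i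
    using f_rec[of "Suc n" i] f_pos[of "Suc n" i] that by (simp add: field_simps)
  moreover have "(\<lambda>i. bd_II a b N (f (Suc n)) i) ` {0..N} = (\<lambda>i. f (Suc (Suc n)) i / f (Suc n) i) ` {0..N}"
    for n by (rule image_cong) (simp_all add: II)
  ultimately show ?thesis
    using invertible_negQ left_inverse_negQ_eq_green_mat green_iteration_vec[of f, OF f_Suc] L(4-6)
    by (auto intro: LIMSEQ_imp_Suc)
qed

end
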